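(* Let $V$ be a finite dimensional normed vector space and $H\le O(V)$. Let $L_i:H\to\mathbb{R}$ be group-norms such that the functions $d_i(u,v)=\inf_{a\in H}\sqrt{L_i(a)^2+\|au-v\|^2}$ converge uniformly on compact sets to a semi-metric $d_\infty$ on $V$. Let $$G_0=\{g\in O(V):\ \exists\,a_i\in H\text{ with } a_i\to g \text{ and }\liminf_{i\to\infty}L_i(a_i)=0\}.$$ Then for $u,v\in V$, $d_\infty(u,v)=0$ if and only if $v=gu$ for some $g\in G_0$.
   Context: $O(V)$ is the group of norm-preserving linear maps of $V$. A group-norm on $H$ is $L:H\to\mathbb{R}$ with $L(a)\ge0$, $L(a)=0$ iff $a=e$, $L(a^{-1})=L(a)$, $L(ab)\le L(a)+L(b)$. *)

theory Defs
  imports "HOL-Analysis.Analysis" "HOL-Library.Liminf_Limsup"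
begin

definition orth_maps :: "('a::real_normed_vector \<Rightarrow> 'a) set" where
  "orth_maps = {f. linear f \<and> (\<forall>x. norm (f x) = norm x)}"

definition subgroup_O :: "('a::real_normed_vector \<Rightarrow> 'a) set \<Rightarrow> bool" where
  "subgroup_O H \<longleftrightarrow> H \<subseteq> orth_maps \<and> id \<in> H \<and>
     (\<forall>a\<in>H. \<forall>b\<in>H. a \<circ> b \<in> H) \<and> (\<forall>a\<in>H. inv a \<in> H)"

definition group_norm :: "('a \<Rightarrow> 'a) set \<Rightarrow> (('a \<Rightarrow> 'a) \<Rightarrow> real) \<Rightarrow> bool" where
  "group_norm H L \<longleftrightarrow>
     (\<forall>a\<in>H. L a \<ge> 0) \<and> (\<forall>a\<in>H. L a = 0 \<longleftrightarrow> a = id) \<and>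
     (\<forall>a\<in>H. L (inv a) = L a) \<and> (\<forall>a\<in>H. \<forall>b\<in>H. L (a \<circ> b) \<le> L a + L b)"

definition semimetric :: "('a \<Rightarrow> 'a \<Rightarrow> real) \<Rightarrow> bool" where
  "semimetric d \<longleftrightarrow> (\<forall>u v. d u v \<ge> 0) \<and> (\<forall>u. d u u = 0) \<and> (\<forall>u v. d u v = d v u)"

definition dist_L :: "('a::real_normed_vector \<Rightarrow> 'a) set \<Rightarrow> (('a \<Rightarrow> 'a) \<Rightarrow> real) \<Rightarrow> 'a \<Rightarrow> 'a \<Rightarrow> real" where
  "dist_L H L u v = (INF a\<in>H. sqrt ((L a)\<^sup>2 + (norm (a u - v))\<^sup>2))"

end

theory Submission
  imports Defs
begin

text \<open>
  Let V be finite dimensional, H a subgroup of O(V), L_i group-norms on H, and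
  d_i(u,v) = inf_{a\<in>H} sqrt(L_i(a)^2 + |au - v|^2) with d_i \<rightarrow> d_\<infinity> uniformly on compacta
  (only pointwise convergence is used).

  (\<Leftarrow>) If a_i \<rightarrow> g in operator norm and liminf L_i(a_i) = 0, then along a subsequence
  with L_i(a_i) \<rightarrow> 0 we have d_i(u, gu) \<le> L_i(a_i) + |a_i u - gu| \<rightarrow> 0.

  (\<Rightarrow>) If d_i(u,v) \<rightarrow> 0, choose near-minimizers a_i \<in> H; then L_i(a_i) \<rightarrow> 0 and a_i u \<rightarrow> v.
  Since V is finite dimensional, O(V) is sequentially compact in the operator norm, so a
  subsequence converges to some g \<in> O(V) with gu = v.  Filling the gaps of the subsequence
  with its own terms yields a full sequence in H converging to g with liminf L_i = 0.
\<close>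

text \<open>First the normalised case: on the compact set of coefficient vectors of l1-norm one,
  the continuous function c \<mapsto> norm (\<Sum>c b b) attains a minimum, which is positive by
  independence.\<close>

lemma l1_unit_coefficients_norm_lower_bound:
  fixes B :: "'a::real_normed_vector set"
  assumes fin: "finite B" and ind: "independent B"
  shows "\<exists>m>0. \<forall>c. (\<Sum>b\<in>B. \<bar>c b\<bar>) = 1 \<longrightarrow> m \<le> norm (\<Sum>b\<in>B. c b *\<^sub>R b)"
proof -
  define K :: "('a \<Rightarrow> real) set" where "K = PiE UNIV (\<lambda>b. if b \<in> B then {-1..1} else {0})"
  define S where "S = K \<inter> {c. (\<Sum>b\<in>B. \<bar>c b\<bar>) = 1}"
  define N where "N c = norm (\<Sum>b\<in>B. c b *\<^sub>R b)" for c :: "'a \<Rightarrow> real"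
  have coord: "continuous_on A (\<lambda>c::'a\<Rightarrow>real. c b)" for A b
    by (rule continuous_on_subset[OF continuous_on_product_coordinates]) simp
  have "compactin (product_topology (\<lambda>_. euclidean) UNIV) K"
    unfolding K_def compactin_PiE by auto
  hence "compact K" by (simp add: euclidean_product_topology)
  moreover have "closed {c::'a\<Rightarrow>real. (\<Sum>b\<in>B. \<bar>c b\<bar>) = 1}"
    by (intro closed_Collect_eq continuous_intros coord)
  ultimately have "compact S" unfolding S_def by blast
  have restrict_in_S: "(\<lambda>b. if b \<in> B then c b else 0) \<in> S" if "(\<Sum>b\<in>B. \<bar>c b\<bar>) = 1" for c
  proof -
    have "\<bar>c b\<bar> \<le> 1" if "b \<in> B" for b
      using member_le_sum[of b B "\<lambda>b. \<bar>c b\<bar>"] \<open>b \<in> B\<close> fin \<open>(\<Sum>b\<in>B. \<bar>c b\<bar>) = 1\<close> by simp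
    thus ?thesis using that unfolding S_def K_def by (auto simp: abs_le_iff)
  qed
  have N_restrict: "N (\<lambda>b. if b \<in> B then c b else 0) = N c" for c
    unfolding N_def by (intro arg_cong[where f=norm] sum.cong) auto
  show ?thesis
  proof (cases "S = {}")
    case True
    thus ?thesis using restrict_in_S by (intro exI[of _ 1]) auto
  next
    case False
    have "continuous_on S N" unfolding N_def by (intro continuous_intros coord)
    then obtain c0 where c0: "c0 \<in> S" and min: "\<And>c. c \<in> S \<Longrightarrow> N c0 \<le> N c"
      using continuous_attains_inf[OF \<open>compact S\<close> False] by blast
    have "N c0 \<noteq> 0"
    proof
      assume "N c0 = 0"
      hence "(\<Sum>b\<in>B. c0 b *\<^sub>R b) = 0" unfolding N_def by simp
      hence "\<forall>b\<in>B. c0 b = 0" using ind fin dependent_finite by blast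
      thus False using c0 unfolding S_def by simp
    qed
    hence "N c0 > 0" unfolding N_def by simp
    show ?thesis
    proof (intro exI[of _ "N c0"] conjI allI impI)
      fix c :: "'a \<Rightarrow> real" assume "(\<Sum>b\<in>B. \<bar>c b\<bar>) = 1"
      hence "N c0 \<le> N c" using min[OF restrict_in_S[of c]] N_restrict[of c] by simp
      thus "N c0 \<le> norm (\<Sum>b\<in>B. c b *\<^sub>R b)" by (simp add: N_def)
    qed fact
  qed
qed

text \<open>The general case follows by scaling.\<close>

lemma coefficients_l1_bound:
  fixes B :: "'a::real_normed_vector set"
  assumes fin: "finite B" and ind: "independent B"
  shows "\<exists>C>0. \<forall>c. (\<Sum>b\<in>B. \<bar>c b\<bar>) \<le> C * norm (\<Sum>b\<in>B. c b *\<^sub>R b)"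
proof -
  obtain m where m: "m > 0" and low: "\<And>c. (\<Sum>b\<in>B. \<bar>c b\<bar>) = 1 \<Longrightarrow> m \<le> norm (\<Sum>b\<in>B. c b *\<^sub>R b)"
    using l1_unit_coefficients_norm_lower_bound[OF fin ind] by blast
  have "(\<Sum>b\<in>B. \<bar>c b\<bar>) \<le> 1/m * norm (\<Sum>b\<in>B. c b *\<^sub>R b)" for c
  proof (cases "(\<Sum>b\<in>B. \<bar>c b\<bar>) = 0")
    case False
    define s where "s = (\<Sum>b\<in>B. \<bar>c b\<bar>)"
    have "s > 0" using False unfolding s_def by (simp add: order_le_neq_trans sum_nonneg)
    have "(\<Sum>b\<in>B. \<bar>c b / s\<bar>) = 1"
      using \<open>s > 0\<close> False by (simp add: s_def abs_divide sum_divide_distrib[symmetric])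
    hence "m \<le> norm (\<Sum>b\<in>B. (c b / s) *\<^sub>R b)" by (rule low)
    also have "(\<Sum>b\<in>B. (c b / s) *\<^sub>R b) = (1/s) *\<^sub>R (\<Sum>b\<in>B. c b *\<^sub>R b)"
      by (simp add: scaleR_sum_right)
    finally have "m * s \<le> norm (\<Sum>b\<in>B. c b *\<^sub>R b)" using \<open>s > 0\<close> by (simp add: field_simps)
    thus ?thesis using m unfolding s_def by (simp add: field_simps)
  qed (use m in simp)
  thus ?thesis using m by (intro exI[of _ "1/m"]) auto
qed

lemma basis_representation_sum:
  fixes B :: "'a::real_vector set"
  assumes fin: "finite B" and ind: "independent B" and sp: "span B = UNIV"
  shows "(\<Sum>b\<in>B. representation B x b *\<^sub>R b) = x"
  using sum_representation_eq[OF ind _ fin subset_refl] sp by auto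

lemma basis_coordinates_bound:
  fixes B :: "'a::real_normed_vector set"
  assumes fin: "finite B" and ind: "independent B" and sp: "span B = UNIV"
  shows "\<exists>C>0. \<forall>x. (\<Sum>b\<in>B. \<bar>representation B x b\<bar>) \<le> C * norm x"
proof -
  obtain C where "C > 0" "\<And>c. (\<Sum>b\<in>B. \<bar>c b\<bar>) \<le> C * norm (\<Sum>b\<in>B. c b *\<^sub>R b)"
    using coefficients_l1_bound[OF fin ind] by blast
  thus ?thesis using basis_representation_sum[OF fin ind sp] by metis
qed

lemma linear_basis_expansion:
  fixes B :: "'a::real_vector set"
  assumes fin: "finite B" and ind: "independent B" and sp: "span B = UNIV" and "linear h"
  shows "h x = (\<Sum>b\<in>B. representation B x b *\<^sub>R h b)"
proof -
  have "h x = h (\<Sum>b\<in>B. representation B x b *\<^sub>R b)"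
    using basis_representation_sum[OF fin ind sp] by simp
  also have "\<dots> = (\<Sum>b\<in>B. representation B x b *\<^sub>R h b)"
    using \<open>linear h\<close> by (simp add: linear_sum linear_scale)
  finally show ?thesis .
qed

lemma finite_basis_exists:
  assumes "\<exists>B0::'a::real_vector set. finite B0 \<and> span B0 = UNIV"
  shows "\<exists>B::'a set. finite B \<and> independent B \<and> span B = UNIV"
proof -
  obtain B0 :: "'a set" where B0: "finite B0" "span B0 = UNIV" using assms by blast
  obtain B where B: "B \<subseteq> B0" "independent B" "B0 \<subseteq> span B" by (metis basis_exists)
  have "span B = UNIV" using span_mono[OF B(3)] B0(2) by (simp add: span_span top.extremum_unique)
  then show ?thesis using B(2) finite_subset[OF B(1) B0(1)] by blast
qed

lemma bounded_real_sequences_common_convergent_subseq: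
  fixes X :: "'s \<Rightarrow> nat \<Rightarrow> real"
  assumes "finite S" and "\<And>s. s \<in> S \<Longrightarrow> \<exists>M. \<forall>n. \<bar>X s n\<bar> \<le> M"
  shows "\<exists>r. strict_mono r \<and> (\<forall>s\<in>S. \<exists>l. (X s \<circ> r) \<longlonglongrightarrow> l)"
  using assms
proof (induction S rule: finite_induct)
  case empty
  show ?case by (intro exI[of _ id]) (auto simp: strict_mono_def)
next
  case (insert t S)
  then obtain r where r: "strict_mono r" "\<forall>s\<in>S. \<exists>l. (X s \<circ> r) \<longlonglongrightarrow> l" by blast
  obtain M where "\<forall>n. \<bar>X t n\<bar> \<le> M" using insert.prems by blast
  hence "\<forall>n. (X t \<circ> r) n \<in> {-M..M}" by (simp add: abs_le_iff) (metis minus_le_iff)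
  then obtain l r' where r': "strict_mono r'" "(X t \<circ> r \<circ> r') \<longlonglongrightarrow> l"
    using compact_imp_seq_compact[OF compact_Icc] by (metis seq_compactE)
  have "\<exists>l. (X s \<circ> (r \<circ> r')) \<longlonglongrightarrow> l" if s: "s \<in> insert t S" for s
  proof (cases "s = t")
    case False
    then obtain l where "(X s \<circ> r) \<longlonglongrightarrow> l" using r s by auto
    from LIMSEQ_subseq_LIMSEQ[OF this r'(1)] show ?thesis by (auto simp: o_assoc)
  qed (use r' in \<open>auto simp: o_assoc\<close>)
  moreover have "strict_mono (r \<circ> r')" using r(1) r'(1) by (rule strict_mono_o)
  ultimately show ?case by blast
qed

lemma orth_maps_bounded_linear: "f \<in> orth_maps \<Longrightarrow> bounded_linear f"
  unfolding orth_maps_def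
  by (auto intro!: bounded_linear_intro[where K=1] simp: linear_add linear_scale)

lemma orth_maps_pointwise_limit:
  assumes orth: "\<And>i. f i \<in> orth_maps" and lim: "\<And>x. (\<lambda>i. f i x) \<longlonglongrightarrow> g x"
  shows "g \<in> orth_maps"
proof -
  have lin: "linear (f i)" and nrm: "norm (f i x) = norm x" for i x
    using orth[of i] unfolding orth_maps_def by auto
  have "(\<lambda>i. f i (x + y)) \<longlonglongrightarrow> g x + g y" for x y
    using tendsto_add[OF lim[of x] lim[of y]] lin by (simp add: linear_add)
  hence add: "g (x + y) = g x + g y" for x y using lim LIMSEQ_unique by blast
  have "(\<lambda>i. f i (c *\<^sub>R x)) \<longlonglongrightarrow> c *\<^sub>R g x" for c x
    using tendsto_scaleR[OF tendsto_const lim[of x]] lin by (simp add: linear_scale)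
  hence scale: "g (c *\<^sub>R x) = c *\<^sub>R g x" for c x using lim LIMSEQ_unique by blast
  have "(\<lambda>i. norm x) \<longlonglongrightarrow> norm (g x)" for x
    using tendsto_norm[OF lim[of x]] nrm by simp
  hence "norm (g x) = norm x" for x using LIMSEQ_unique tendsto_const by blast
  thus ?thesis unfolding orth_maps_def using add scale by (auto intro: linearI)
qed

text \<open>In finite dimension, convergence of linear maps on a basis implies convergence in
  operator norm: the error on x is at most (coordinate bound) \<times> (errors on the basis) \<times> |x|.\<close>

lemma onorm_tendsto_of_tendsto_on_basis:
  fixes f :: "nat \<Rightarrow> 'a::real_normed_vector \<Rightarrow> 'b::real_normed_vector"
  assumes fin: "finite B" and ind: "independent B" and sp: "span B = UNIV"
    and lin: "\<And>i. linear (f i)" "linear g"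
    and lim: "\<And>b. b \<in> B \<Longrightarrow> (\<lambda>i. f i b) \<longlonglongrightarrow> g b"
  shows "(\<lambda>i. onorm (\<lambda>x. f i x - g x)) \<longlonglongrightarrow> 0"
proof -
  obtain C where C: "C > 0" and coords: "\<And>x. (\<Sum>b\<in>B. \<bar>representation B x b\<bar>) \<le> C * norm x"
    using basis_coordinates_bound[OF fin ind sp] by blast
  note expand = linear_basis_expansion[OF fin ind sp]
  define E where "E i = (\<Sum>b\<in>B. norm (f i b - g b))" for i
  have "(\<lambda>i. \<Sum>b\<in>B. norm (f i b - g b)) \<longlonglongrightarrow> (\<Sum>b\<in>B. 0)"
    by (intro tendsto_sum tendsto_norm_zero) (use lim LIM_zero in blast)
  hence E0: "E \<longlonglongrightarrow> 0" unfolding E_def by simp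
  have E_nonneg: "E i \<ge> 0" for i unfolding E_def by (simp add: sum_nonneg)
  have bound: "norm (f i x - g x) \<le> C * E i * norm x" for i x
  proof -
    let ?R = "representation B x"
    have "f i x - g x = (\<Sum>b\<in>B. ?R b *\<^sub>R (f i b - g b))"
      using expand[OF lin(1)[of i], of x] expand[OF lin(2), of x]
      by (simp add: sum_subtractf scaleR_diff_right)
    hence "norm (f i x - g x) \<le> (\<Sum>b\<in>B. norm (?R b *\<^sub>R (f i b - g b)))"
      by (simp only: norm_sum)
    also have "\<dots> = (\<Sum>b\<in>B. \<bar>?R b\<bar> * norm (f i b - g b))" by simp
    also have "\<dots> \<le> (\<Sum>b\<in>B. \<bar>?R b\<bar> * E i)"
      unfolding E_def using fin by (intro sum_mono mult_left_mono member_le_sum) auto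
    also have "\<dots> = (\<Sum>b\<in>B. \<bar>?R b\<bar>) * E i" by (simp add: sum_distrib_right)
    also have "\<dots> \<le> C * norm x * E i" using coords[of x] E_nonneg by (simp add: mult_right_mono)
    finally show ?thesis by (simp add: mult_ac)
  qed
  show ?thesis
  proof (rule Lim_null_comparison)
    show "(\<lambda>i. C * E i) \<longlonglongrightarrow> 0" using tendsto_mult_right_zero[OF E0] by simp
    have "bounded_linear (\<lambda>x. f i x - g x)" for i
      using bound by (intro bounded_linear_intro[where K="C * E i"])
        (auto simp: linear_add[OF lin(1)] linear_add[OF lin(2)] linear_scale[OF lin(1)]
          linear_scale[OF lin(2)] algebra_simps)
    moreover have "onorm (\<lambda>x. f i x - g x) \<le> C * E i" for i
      using C E_nonneg bound by (intro onorm_bound) auto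
    ultimately show "\<forall>\<^sub>F i in sequentially. norm (onorm (\<lambda>x. f i x - g x)) \<le> C * E i"
      by (simp add: onorm_pos_le)
  qed
qed

text \<open>Sequential compactness of O(V) in the operator norm, for V finite dimensional:
  the coordinates of the images of the basis vectors are bounded, so along a common
  subsequence they converge; the limits define a map g on the basis, to which the whole
  subsequence converges pointwise and then in operator norm.\<close>

lemma orth_maps_convergent_subseq:
  fixes a :: "nat \<Rightarrow> 'a::real_normed_vector \<Rightarrow> 'a"
  assumes fin_dim: "\<exists>B::'a set. finite B \<and> span B = UNIV" and orth: "\<And>i. a i \<in> orth_maps"
  shows "\<exists>r g. strict_mono r \<and> g \<in> orth_maps \<and> (\<lambda>i. onorm (\<lambda>x. a (r i) x - g x)) \<longlonglongrightarrow> 0"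
proof -
  obtain B :: "'a set" where fin: "finite B" and ind: "independent B" and sp: "span B = UNIV"
    using finite_basis_exists[OF fin_dim] by blast
  obtain C where coords: "\<And>x. (\<Sum>b\<in>B. \<bar>representation B x b\<bar>) \<le> C * norm x"
    using basis_coordinates_bound[OF fin ind sp] by blast
  have lin: "linear (a i)" and nrm: "norm (a i x) = norm x" for i x
    using orth[of i] unfolding orth_maps_def by auto
  define X where "X = (\<lambda>(b, b') i. representation B (a i b) b')"
  have "\<exists>M. \<forall>i. \<bar>X s i\<bar> \<le> M" if s_in: "s \<in> B \<times> B" for s
  proof -
    obtain b b' where s: "s = (b, b')" and "b' \<in> B" using s_in by auto
    have "\<bar>X s i\<bar> \<le> C * norm b" for i
      using member_le_sum[OF \<open>b' \<in> B\<close>, of "\<lambda>b'. \<bar>representation B (a i b) b'\<bar>"] fin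
        coords[of "a i b"] nrm[of i b] unfolding s X_def by simp
    thus ?thesis by blast
  qed
  then obtain r where r: "strict_mono r" and "\<forall>s\<in>B \<times> B. \<exists>l. (X s \<circ> r) \<longlonglongrightarrow> l"
    using bounded_real_sequences_common_convergent_subseq[of "B \<times> B" X] fin by blast
  then obtain l where l: "\<And>s. s \<in> B \<times> B \<Longrightarrow> (X s \<circ> r) \<longlonglongrightarrow> l s" by metis
  define y where "y b = (\<Sum>b'\<in>B. l (b, b') *\<^sub>R b')" for b
  have on_basis: "(\<lambda>i. a (r i) b) \<longlonglongrightarrow> y b" if "b \<in> B" for b
  proof -
    have "(\<lambda>i. \<Sum>b'\<in>B. X (b, b') (r i) *\<^sub>R b') \<longlonglongrightarrow> y b"
      unfolding y_def by (intro tendsto_intros) (use l that in \<open>auto simp: o_def\<close>)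
    thus ?thesis unfolding X_def by (simp add: basis_representation_sum[OF fin ind sp])
  qed
  define g where "g x = (\<Sum>b\<in>B. representation B x b *\<^sub>R y b)" for x
  have pointwise: "(\<lambda>i. a (r i) x) \<longlonglongrightarrow> g x" for x
  proof -
    have "(\<lambda>i. \<Sum>b\<in>B. representation B x b *\<^sub>R a (r i) b) \<longlonglongrightarrow> g x"
      unfolding g_def by (intro tendsto_intros on_basis)
    moreover have "(\<Sum>b\<in>B. representation B x b *\<^sub>R a (r i) b) = a (r i) x" for i
      by (rule linear_basis_expansion[OF fin ind sp lin, symmetric])
    ultimately show ?thesis by simp
  qed
  have "g \<in> orth_maps" using orth pointwise by (rule orth_maps_pointwise_limit)
  moreover have "(\<lambda>i. onorm (\<lambda>x. a (r i) x - g x)) \<longlonglongrightarrow> 0"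
    using \<open>g \<in> orth_maps\<close> pointwise lin unfolding orth_maps_def
    by (intro onorm_tendsto_of_tendsto_on_basis[OF fin ind sp]) auto
  ultimately show ?thesis using r by (intro exI[of _ r] exI[of _ g]) simp
qed

lemma tendsto_apply_of_onorm_tendsto:
  assumes bl: "\<And>i. bounded_linear (\<lambda>x. f i x - g x)"
    and conv: "(\<lambda>i. onorm (\<lambda>x. f i x - g x)) \<longlonglongrightarrow> 0"
  shows "(\<lambda>i. f i x) \<longlonglongrightarrow> g x"
proof -
  have "(\<lambda>i. f i x - g x) \<longlonglongrightarrow> 0"
  proof (rule Lim_null_comparison)
    show "\<forall>\<^sub>F i in sequentially. norm (f i x - g x) \<le> onorm (\<lambda>x. f i x - g x) * norm x"
      using onorm[OF bl] by simp
    show "(\<lambda>i. onorm (\<lambda>x. f i x - g x) * norm x) \<longlonglongrightarrow> 0"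
      using tendsto_mult_left_zero[OF conv] by simp
  qed
  thus ?thesis by (rule LIM_zero_cancel)
qed

lemma orth_maps_diff_bounded_linear:
  "f \<in> orth_maps \<Longrightarrow> g \<in> orth_maps \<Longrightarrow> bounded_linear (\<lambda>x. f x - g x)"
  by (intro bounded_linear_sub orth_maps_bounded_linear)

lemma LIMSEQ_fill_outside_subseq:
  assumes r: "strict_mono r" and lim: "(X \<circ> r) \<longlonglongrightarrow> l"
  shows "(\<lambda>n. X (if n \<in> range r then n else r n)) \<longlonglongrightarrow> l"
proof -
  define k where "k n = (if n \<in> range r then inv r n else n)" for n
  have fill: "(if n \<in> range r then n else r n) = r (k n)" for n
    unfolding k_def by (auto simp: f_inv_into_f)
  have "eventually (\<lambda>n. N \<le> k n) sequentially" for N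
  proof (rule eventually_sequentiallyI[of "r N"])
    fix n assume n: "r N \<le> n"
    show "N \<le> k n"
    proof (cases "n \<in> range r")
      case True
      hence "r N \<le> r (k n)" using n fill[of n] by simp
      thus ?thesis using r by (simp add: strict_mono_less_eq)
    qed (use n seq_suble[OF r, of N] k_def in auto)
  qed
  hence "filterlim k sequentially sequentially" by (simp add: filterlim_at_top)
  from filterlim_compose[OF lim this] show ?thesis by (simp add: fill o_def)
qed

lemma dist_L_le:
  assumes "a \<in> H"
  shows "dist_L H L u v \<le> sqrt ((L a)\<^sup>2 + (norm (a u - v))\<^sup>2)"
  unfolding dist_L_def by (rule cINF_lower[OF bdd_belowI[of _ 0] assms]) auto

lemma dist_L_le_sum:
  assumes "a \<in> H" and "0 \<le> L a"
  shows "dist_L H L u v \<le> L a + norm (a u - v)"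
  using dist_L_le[OF assms(1), of L u v] sqrt_sum_squares_le_sum_abs[of "L a" "norm (a u - v)"] assms(2)
  by simp

lemma dist_L_nonneg: "H \<noteq> {} \<Longrightarrow> 0 \<le> dist_L H L u v"
  unfolding dist_L_def by (rule cINF_greatest) auto

lemma dist_L_nearly_attained:
  assumes "H \<noteq> {}" and "\<epsilon> > 0"
  shows "\<exists>a\<in>H. sqrt ((L a)\<^sup>2 + (norm (a u - v))\<^sup>2) < dist_L H L u v + \<epsilon>"
proof -
  have bdd: "bdd_below ((\<lambda>a. sqrt ((L a)\<^sup>2 + (norm (a u - v))\<^sup>2)) ` H)"
    by (rule bdd_belowI[of _ 0]) auto
  have "dist_L H L u v < dist_L H L u v + \<epsilon>" using assms(2) by simp
  thus ?thesis unfolding dist_L_def cINF_less_iff[OF assms(1) bdd] .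
qed

text \<open>If the distances d_{L_i}(u,v) tend to zero, there are a_i \<in> H with L_i(a_i) \<rightarrow> 0 and
  a_i u \<rightarrow> v (take a_i within 1/(i+1) of the infimum).\<close>

lemma near_minimizers:
  assumes H: "H \<noteq> {}" and L_nonneg: "\<And>i a. a \<in> H \<Longrightarrow> 0 \<le> L i a"
    and lim: "(\<lambda>i. dist_L H (L i) u v) \<longlonglongrightarrow> 0"
  shows "\<exists>a. (\<forall>i. a i \<in> H) \<and> (\<lambda>i. L i (a i)) \<longlonglongrightarrow> 0 \<and> (\<lambda>i. a i u) \<longlonglongrightarrow> v"
proof -
  define D where "D i = dist_L H (L i) u v + 1 / Suc i" for i
  have "\<forall>i. \<exists>a\<in>H. sqrt ((L i a)\<^sup>2 + (norm (a u - v))\<^sup>2) < D i"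
    unfolding D_def using dist_L_nearly_attained[OF H] by simp
  then obtain a where aH: "\<And>i. a i \<in> H"
    and a: "\<And>i. sqrt ((L i (a i))\<^sup>2 + (norm (a i u - v))\<^sup>2) < D i" by metis
  have D0: "D \<longlonglongrightarrow> 0"
    unfolding D_def using tendsto_add[OF lim LIMSEQ_inverse_real_of_nat]
    by (simp add: inverse_eq_divide)
  have "L i (a i) \<le> D i" and "norm (a i u - v) \<le> D i" for i
    using order_trans[OF real_sqrt_sum_squares_ge1 less_imp_le[OF a[of i]]]
      order_trans[OF real_sqrt_sum_squares_ge2 less_imp_le[OF a[of i]]] by auto
  hence "norm (L i (a i)) \<le> D i" and "norm (a i u - v) \<le> D i" for i
    using L_nonneg[OF aH] by auto
  hence "(\<lambda>i. L i (a i)) \<longlonglongrightarrow> 0" and a_u: "(\<lambda>i. a i u - v) \<longlonglongrightarrow> 0"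
    by (auto intro!: Lim_null_comparison[OF _ D0] always_eventually)
  thus ?thesis using aH LIM_zero_cancel[OF a_u] by (intro exI[of _ a]) simp
qed

text \<open>Along a subsequence with
  L_i(a_i) \<rightarrow> 0 the elements a_i witness d_{L_i}(u, gu) \<le> L_i(a_i) + |a_i u - gu| \<rightarrow> 0.\<close>

lemma limit_dist_vanishes_on_G0_orbit:
  assumes H: "H \<subseteq> orth_maps" "H \<noteq> {}" and L_nonneg: "\<And>i a. a \<in> H \<Longrightarrow> 0 \<le> L i a"
    and aH: "\<And>i. a i \<in> H" and g: "g \<in> orth_maps"
    and conv: "(\<lambda>i. onorm (\<lambda>x. a i x - g x)) \<longlonglongrightarrow> 0"
    and liminf: "liminf (\<lambda>i. ereal (L i (a i))) = 0"
    and lim: "(\<lambda>i. dist_L H (L i) u (g u)) \<longlonglongrightarrow> d"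
  shows "d = 0"
proof -
  obtain r where r: "strict_mono r" and "((\<lambda>i. ereal (L i (a i))) \<circ> r) \<longlonglongrightarrow> 0"
    using liminf_subseq_lim[of "\<lambda>i. ereal (L i (a i))"] liminf by auto
  hence "(\<lambda>k. ereal (L (r k) (a (r k)))) \<longlonglongrightarrow> 0" by (simp add: o_def)
  hence L_sub: "(\<lambda>k. L (r k) (a (r k))) \<longlonglongrightarrow> 0"
    using lim_ereal[of "\<lambda>k. L (r k) (a (r k))" 0 sequentially] by (simp add: zero_ereal_def)
  have "(\<lambda>i. a i u) \<longlonglongrightarrow> g u"
    using orth_maps_diff_bounded_linear[OF subsetD[OF H(1) aH] g]
    by (rule tendsto_apply_of_onorm_tendsto[OF _ conv])
  from LIMSEQ_subseq_LIMSEQ[OF this r] have "(\<lambda>k. a (r k) u) \<longlonglongrightarrow> g u" by (simp add: o_def)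
  hence "(\<lambda>k. a (r k) u - g u) \<longlonglongrightarrow> 0" by (rule LIM_zero)
  hence bound_lim: "(\<lambda>k. L (r k) (a (r k)) + norm (a (r k) u - g u)) \<longlonglongrightarrow> 0"
    using tendsto_add[OF L_sub tendsto_norm_zero] by simp
  have "(\<lambda>k. dist_L H (L (r k)) u (g u)) \<longlonglongrightarrow> d"
    using LIMSEQ_subseq_LIMSEQ[OF lim r] by (simp add: o_def)
  moreover have "dist_L H (L (r k)) u (g u) \<le> L (r k) (a (r k)) + norm (a (r k) u - g u)" for k
    using aH L_nonneg[OF aH] by (rule dist_L_le_sum)
  ultimately have "d \<le> 0" using bound_lim by (intro LIMSEQ_le) auto
  moreover have "0 \<le> d" using lim dist_L_nonneg[OF H(2)] by (intro LIMSEQ_le_const) auto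
  ultimately show "d = 0" by simp
qed

text \<open>The main direction: if d_{L_i}(u,v) \<rightarrow> 0, then v = gu for some g \<in> O(V) that is the
  operator-norm limit of a sequence b_i \<in> H with liminf L_i(b_i) = 0.  The near-minimizers
  a_i have a subsequence converging to g; filling the gaps of that subsequence with its own
  terms gives a full sequence b_i \<rightarrow> g that still agrees with a_i on the subsequence, where
  L_i(a_i) \<rightarrow> 0.\<close>

lemma G0_element_of_vanishing_limit:
  fixes H :: "('a::real_normed_vector \<Rightarrow> 'a) set"
  assumes fin_dim: "\<exists>B::'a set. finite B \<and> span B = UNIV"
    and H: "H \<subseteq> orth_maps" "H \<noteq> {}" and L_nonneg: "\<And>i a. a \<in> H \<Longrightarrow> 0 \<le> L i a"
    and lim: "(\<lambda>i. dist_L H (L i) u v) \<longlonglongrightarrow> 0"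
  shows "\<exists>g\<in>orth_maps. v = g u \<and> (\<exists>b. (\<forall>i. b i \<in> H) \<and>
           (\<lambda>i. onorm (\<lambda>x. b i x - g x)) \<longlonglongrightarrow> 0 \<and> liminf (\<lambda>i. ereal (L i (b i))) = 0)"
proof -
  obtain a where aH: "\<And>i. a i \<in> H" and L_lim: "(\<lambda>i. L i (a i)) \<longlonglongrightarrow> 0"
    and a_u: "(\<lambda>i. a i u) \<longlonglongrightarrow> v"
    using near_minimizers[OF H(2) L_nonneg lim] by blast
  obtain r g where r: "strict_mono r" and g: "g \<in> orth_maps"
    and conv: "(\<lambda>i. onorm (\<lambda>x. a (r i) x - g x)) \<longlonglongrightarrow> 0"
    using orth_maps_convergent_subseq[OF fin_dim, of a] aH H(1) by blast
  have "(\<lambda>i. a (r i) u) \<longlonglongrightarrow> g u"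
    using orth_maps_diff_bounded_linear[OF subsetD[OF H(1) aH] g]
    by (rule tendsto_apply_of_onorm_tendsto[OF _ conv])
  moreover have "(\<lambda>i. a (r i) u) \<longlonglongrightarrow> v" using LIMSEQ_subseq_LIMSEQ[OF a_u r] by (simp add: o_def)
  ultimately have "v = g u" using LIMSEQ_unique by blast
  define b where "b n = a (if n \<in> range r then n else r n)" for n
  have "(\<lambda>n. onorm (\<lambda>x. b n x - g x)) \<longlonglongrightarrow> 0"
    unfolding b_def using LIMSEQ_fill_outside_subseq[OF r, of "\<lambda>i. onorm (\<lambda>x. a i x - g x)"] conv
    by (simp add: o_def)
  moreover have "liminf (\<lambda>n. ereal (L n (b n))) = 0"
  proof (rule antisym)
    have "(\<lambda>k. L (r k) (a (r k))) \<longlonglongrightarrow> 0" using LIMSEQ_subseq_LIMSEQ[OF L_lim r] by (simp add: o_def)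
    hence "(\<lambda>k. ereal (L (r k) (a (r k)))) \<longlonglongrightarrow> 0"
      using lim_ereal[of "\<lambda>k. L (r k) (a (r k))" 0 sequentially] by (simp add: zero_ereal_def)
    hence "((\<lambda>n. ereal (L n (b n))) \<circ> r) \<longlonglongrightarrow> 0" by (simp add: b_def o_def)
    hence "liminf ((\<lambda>n. ereal (L n (b n))) \<circ> r) = 0" by (simp add: lim_imp_Liminf)
    thus "liminf (\<lambda>n. ereal (L n (b n))) \<le> 0" using liminf_subseq_mono[OF r] by metis
    show "0 \<le> liminf (\<lambda>n. ereal (L n (b n)))"
      by (rule Liminf_bounded) (use L_nonneg aH in \<open>auto simp: b_def\<close>)
  qed
  moreover have "\<forall>n. b n \<in> H" using aH by (simp add: b_def)
  ultimately show ?thesis using g \<open>v = g u\<close> by blast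
qed

theorem mainTheorem13:
  fixes H :: "('a::real_normed_vector \<Rightarrow> 'a) set"
    and L :: "nat \<Rightarrow> ('a \<Rightarrow> 'a) \<Rightarrow> real"
    and dinf :: "'a \<Rightarrow> 'a \<Rightarrow> real"
    and G0 :: "('a \<Rightarrow> 'a) set"
  assumes fin_dim: "\<exists>B::'a set. finite B \<and> span B = UNIV"
    and H: "subgroup_O H"
    and L: "\<And>i. group_norm H (L i)"
    and conv: "\<And>K. compact K \<Longrightarrow>
        uniform_limit K (\<lambda>i (u, v). dist_L H (L i) u v) (\<lambda>(u, v). dinf u v) sequentially"
    and semi: "semimetric dinf"
    and G0_def: "G0 = {g \<in> orth_maps. \<exists>a::nat \<Rightarrow> 'a \<Rightarrow> 'a. (\<forall>i. a i \<in> H) \<and>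
        (\<lambda>i. onorm (\<lambda>x. a i x - g x)) \<longlonglongrightarrow> 0 \<and>
        liminf (\<lambda>i. ereal (L i (a i))) = 0}"
  shows "\<forall>u v. dinf u v = 0 \<longleftrightarrow> (\<exists>g\<in>G0. v = g u)"
proof -
  have H_orth: "H \<subseteq> orth_maps" and H_ne: "H \<noteq> {}"
    using H unfolding subgroup_O_def by auto
  have L_nonneg: "\<And>i a. a \<in> H \<Longrightarrow> 0 \<le> L i a" using L unfolding group_norm_def by auto
  have lim: "(\<lambda>i. dist_L H (L i) u v) \<longlonglongrightarrow> dinf u v" for u v
    using tendsto_uniform_limitI[OF conv[of "{(u, v)}"], of "(u, v)"] by simp
  have in_orbit: "\<exists>g\<in>G0. v = g u" if "dinf u v = 0" for u v
  proof -
    have "(\<lambda>i. dist_L H (L i) u v) \<longlonglongrightarrow> 0" using lim[of u v] that by simp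
    from G0_element_of_vanishing_limit[OF fin_dim H_orth H_ne L_nonneg this]
    show ?thesis unfolding G0_def by auto
  qed
  have vanishes: "dinf u v = 0" if orbit: "\<exists>g\<in>G0. v = g u" for u v
  proof -
    obtain g a where g: "g \<in> orth_maps" and v: "v = g u" and aH: "\<And>i. a i \<in> H"
      and a_conv: "(\<lambda>i. onorm (\<lambda>x. a i x - g x)) \<longlonglongrightarrow> 0"
      and liminf: "liminf (\<lambda>i. ereal (L i (a i))) = 0"
      using orbit unfolding G0_def by blast
    from lim[of u v] have "(\<lambda>i. dist_L H (L i) u (g u)) \<longlonglongrightarrow> dinf u v" by (simp add: v)
    from limit_dist_vanishes_on_G0_orbit[where L=L, OF H_orth H_ne L_nonneg aH g a_conv liminf this]
    show ?thesis .
  qed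
  show ?thesis using in_orbit vanishes by blast
qed

end
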